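(* Let $G=(V,E)$ be a finite perfect graph with vertex cost function $w:V\to\mathbb{Q}_+$. Then the core of the investment management game on $G$ (defined in the context) is non-empty.
   Context: A graph $G$ is perfect if for every $S\subseteq V$ the induced subgraph $G(S)$ satisfies $\omega(G(S))=\chi(G(S))$ (clique number equals chromatic number). A stable (independent) set is a set of pairwise non-adjacent vertices. The investment management game on $G$ with costs $w$: let $\mathcal{M}$ be the set of maximal cliques of $G$ (the investment firms). For $S\subseteq V$ (a scenario), $\mathrm{cost}(S)$ is the maximum of $\sum_{v\in I} w_v$ over stable sets $I$ of the induced subgraph $G(S)$, and $T=\mathrm{cost}(V)$. An imputation is a function $y:\mathcal{M}\to\mathbb{Q}_+$ with $\sum_{Q\in\mathcal{M}} y_Q=T$; for a scenario $S$, $\mathrm{money}(S)=\sum_{Q\in\mathcal{M}:\, Q\cap S\neq\emptyset} y_Q$. The core is the set of imputations $y$ with $\mathrm{money}(S)\ge\mathrm{cost}(S)$ for all $S\subseteq V$. *)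

theory Defs
  imports Complex_Main
begin

definition simple_graph :: "'a set \<Rightarrow> ('a \<Rightarrow> 'a \<Rightarrow> bool) \<Rightarrow> bool" where
  "simple_graph V E \<longleftrightarrow> finite V \<and> (\<forall>u\<in>V. \<forall>v\<in>V. E u v \<longleftrightarrow> E v u) \<and> (\<forall>v\<in>V. \<not> E v v)"

definition clique :: "('a \<Rightarrow> 'a \<Rightarrow> bool) \<Rightarrow> 'a set \<Rightarrow> 'a set \<Rightarrow> bool" where
  "clique E S Q \<longleftrightarrow> Q \<subseteq> S \<and> (\<forall>u\<in>Q. \<forall>v\<in>Q. u \<noteq> v \<longrightarrow> E u v)"

definition stable_set :: "('a \<Rightarrow> 'a \<Rightarrow> bool) \<Rightarrow> 'a set \<Rightarrow> 'a set \<Rightarrow> bool" where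
  "stable_set E S I \<longleftrightarrow> I \<subseteq> S \<and> (\<forall>u\<in>I. \<forall>v\<in>I. u \<noteq> v \<longrightarrow> \<not> E u v)"

definition clique_number :: "('a \<Rightarrow> 'a \<Rightarrow> bool) \<Rightarrow> 'a set \<Rightarrow> nat" where
  "clique_number E S = Max (card ` {Q. clique E S Q})"

definition proper_colouring :: "('a \<Rightarrow> 'a \<Rightarrow> bool) \<Rightarrow> 'a set \<Rightarrow> nat \<Rightarrow> ('a \<Rightarrow> nat) \<Rightarrow> bool" where
  "proper_colouring E S k c \<longleftrightarrow> (\<forall>v\<in>S. c v < k) \<and> (\<forall>u\<in>S. \<forall>v\<in>S. E u v \<longrightarrow> c u \<noteq> c v)"

definition chromatic_number :: "('a \<Rightarrow> 'a \<Rightarrow> bool) \<Rightarrow> 'a set \<Rightarrow> nat" where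
  "chromatic_number E S = (LEAST k. \<exists>c. proper_colouring E S k c)"

definition perfect :: "'a set \<Rightarrow> ('a \<Rightarrow> 'a \<Rightarrow> bool) \<Rightarrow> bool" where
  "perfect V E \<longleftrightarrow> (\<forall>S\<subseteq>V. clique_number E S = chromatic_number E S)"

definition maximal_cliques :: "'a set \<Rightarrow> ('a \<Rightarrow> 'a \<Rightarrow> bool) \<Rightarrow> 'a set set" where
  "maximal_cliques V E = {Q. clique E V Q \<and> (\<forall>Q'. clique E V Q' \<and> Q \<subseteq> Q' \<longrightarrow> Q' = Q)}"

definition cost :: "('a \<Rightarrow> 'a \<Rightarrow> bool) \<Rightarrow> ('a \<Rightarrow> rat) \<Rightarrow> 'a set \<Rightarrow> rat" where
  "cost E w S = Max ((\<lambda>I. \<Sum>v\<in>I. w v) ` {I. stable_set E S I})"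

definition money :: "'a set \<Rightarrow> ('a \<Rightarrow> 'a \<Rightarrow> bool) \<Rightarrow> ('a set \<Rightarrow> rat) \<Rightarrow> 'a set \<Rightarrow> rat" where
  "money V E y S = (\<Sum>Q\<in>{Q\<in>maximal_cliques V E. Q \<inter> S \<noteq> {}}. y Q)"

definition imputation :: "'a set \<Rightarrow> ('a \<Rightarrow> 'a \<Rightarrow> bool) \<Rightarrow> ('a \<Rightarrow> rat) \<Rightarrow> ('a set \<Rightarrow> rat) \<Rightarrow> bool" where
  "imputation V E w y \<longleftrightarrow> (\<forall>Q\<in>maximal_cliques V E. y Q \<ge> 0)
     \<and> (\<Sum>Q\<in>maximal_cliques V E. y Q) = cost E w V"

definition core :: "'a set \<Rightarrow> ('a \<Rightarrow> 'a \<Rightarrow> bool) \<Rightarrow> ('a \<Rightarrow> rat) \<Rightarrow> ('a set \<Rightarrow> rat) set" where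
  "core V E w = {y. imputation V E w y \<and> (\<forall>S\<subseteq>V. money V E y S \<ge> cost E w S)}"

end

theory Submission
  imports Defs "HOL-Library.Multiset"
begin

(* For integer vertex weights m, perfection yields a multiset of at most omega(m) stable sets
  covering each vertex v exactly m v times (Lovasz): induct on the total weight and take one unit
  off a vertex v of weight at least 2; if omega does not drop, the colour class through v meets
  every maximum clique and can be split off.  Double counting against such a colouring shows that
  some clique meets every maximum-weight stable set in a vertex of positive weight; taking one unit
  of weight off that clique lowers alpha, so induction gives at most alpha(w) cliques covering each
  vertex v at least w v times.  Scale the rational costs to integers, enlarge the cliques to
  maximal ones and pay every maximal clique its multiplicity divided by the scaling factor.  A
  stable set I of G(S) needs w(I) units of cover, and a clique meets I at most once and only if it
  meets S, so money(S) >= cost(S); the total payment is at most alpha(w) = cost(V). *)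

abbreviation cliques :: "('a \<Rightarrow> 'a \<Rightarrow> bool) \<Rightarrow> 'a set \<Rightarrow> 'a set set" where
  "cliques E V \<equiv> {Q. clique E V Q}"

abbreviation stable_sets :: "('a \<Rightarrow> 'a \<Rightarrow> bool) \<Rightarrow> 'a set \<Rightarrow> 'a set set" where
  "stable_sets E V \<equiv> {I. stable_set E V I}"

lemma clique_empty: "clique E V {}"
  by (simp add: clique_def)

lemma stable_set_empty: "stable_set E V {}"
  by (simp add: stable_set_def)

lemma finite_clique: "finite V \<Longrightarrow> clique E V Q \<Longrightarrow> finite Q"
  by (auto simp: clique_def intro: finite_subset)

lemma finite_stable_set: "finite V \<Longrightarrow> stable_set E V I \<Longrightarrow> finite I"
  by (auto simp: stable_set_def intro: finite_subset)

lemma finite_cliques: "finite V \<Longrightarrow> finite (cliques E V)"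
  by (rule finite_subset[of _ "Pow V"]) (auto simp: clique_def)

lemma finite_stable_sets: "finite V \<Longrightarrow> finite (stable_sets E V)"
  by (rule finite_subset[of _ "Pow V"]) (auto simp: stable_set_def)

lemma card_clique_Int_stable_set_le_1:
  assumes "clique E V Q" "stable_set E S I" "finite Q"
  shows "card (Q \<inter> I) \<le> 1"
proof -
  have "\<forall>x\<in>Q \<inter> I. \<forall>y\<in>Q \<inter> I. x = y"
    using assms(1,2) unfolding clique_def stable_set_def by blast
  with assms(3) show ?thesis
    by (simp add: card_le_Suc0_iff_eq)
qed

definition max_weight :: "'a set set \<Rightarrow> ('a \<Rightarrow> nat) \<Rightarrow> nat" where
  "max_weight F m = Max (sum m ` F)"

lemma sum_le_max_weight: "finite F \<Longrightarrow> X \<in> F \<Longrightarrow> sum m X \<le> max_weight F m"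
  unfolding max_weight_def by simp

lemma max_weight_attained:
  assumes "finite F" "F \<noteq> {}"
  shows "\<exists>X\<in>F. sum m X = max_weight F m"
proof -
  have "Max (sum m ` F) \<in> sum m ` F"
    using assms by (intro Max_in) auto
  then show ?thesis
    unfolding max_weight_def by auto
qed

lemma max_weight_mono:
  assumes "finite F" "F \<noteq> {}" "\<And>X u. X \<in> F \<Longrightarrow> u \<in> X \<Longrightarrow> m' u \<le> m u"
  shows "max_weight F m' \<le> max_weight F m"
proof -
  obtain X where "X \<in> F" "sum m' X = max_weight F m'"
    using max_weight_attained assms(1,2) by blast
  moreover have "sum m' X \<le> sum m X"
    using assms(3) \<open>X \<in> F\<close> by (intro sum_mono) auto
  ultimately show ?thesis
    using sum_le_max_weight[OF assms(1) \<open>X \<in> F\<close>, of m] by linarith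
qed

lemma max_weight_less:
  assumes "finite F" "F \<noteq> {}" "\<And>X. X \<in> F \<Longrightarrow> finite X"
    and "\<And>X u. X \<in> F \<Longrightarrow> u \<in> X \<Longrightarrow> m' u \<le> m u"
    and "\<And>X. X \<in> F \<Longrightarrow> sum m X = max_weight F m \<Longrightarrow> \<exists>u\<in>X. m' u < m u"
  shows "max_weight F m' < max_weight F m"
proof -
  obtain X where X: "X \<in> F" "sum m' X = max_weight F m'"
    using max_weight_attained assms(1,2) by blast
  have "sum m' X < max_weight F m"
  proof (cases "sum m X = max_weight F m")
    case True
    then have "sum m' X < sum m X"
      using assms(3-5) X(1) by (intro sum_strict_mono_ex1) auto
    with True show ?thesis by simp
  next
    case False
    have "sum m' X \<le> sum m X"
      using assms(4) X(1) by (intro sum_mono) auto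
    with False sum_le_max_weight[OF assms(1) X(1), of m] show ?thesis by linarith
  qed
  with X(2) show ?thesis by simp
qed

(* Truncated subtraction: weight 0 stays 0, so a whole clique may be decremented at once. *)
definition decrement :: "'a set \<Rightarrow> ('a \<Rightarrow> nat) \<Rightarrow> 'a \<Rightarrow> nat" where
  "decrement A m u = (if u \<in> A then m u - 1 else m u)"

lemma decrement_le: "decrement A m u \<le> m u"
  by (simp add: decrement_def)

lemma sum_decrement_less:
  assumes "finite V" "u \<in> V" "u \<in> A" "0 < m u"
  shows "sum (decrement A m) V < sum m V"
proof (rule sum_strict_mono_ex1[OF assms(1)])
  show "\<forall>x\<in>V. decrement A m x \<le> m x"
    by (simp add: decrement_le)
  show "\<exists>x\<in>V. decrement A m x < m x"
    using assms(2-4) by (intro bexI[of _ u]) (simp_all add: decrement_def)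
qed

lemma max_weight_decrement_less:
  assumes "finite F" "F \<noteq> {}" "\<And>X. X \<in> F \<Longrightarrow> finite X"
    and "\<And>X. X \<in> F \<Longrightarrow> sum m X = max_weight F m \<Longrightarrow> \<exists>u\<in>X \<inter> A. 0 < m u"
  shows "max_weight F (decrement A m) < max_weight F m"
proof (rule max_weight_less[OF assms(1-3)])
  show "decrement A m u \<le> m u" for u
    by (rule decrement_le)
  show "\<exists>u\<in>X. decrement A m u < m u" if X: "X \<in> F" "sum m X = max_weight F m" for X
  proof -
    obtain u where "u \<in> X \<inter> A" "0 < m u"
      using assms(4)[OF X] by blast
    then show ?thesis
      by (intro bexI[of _ u]) (auto simp: decrement_def)
  qed
qed

definition cover_count :: "'a set multiset \<Rightarrow> 'a \<Rightarrow> nat" where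
  "cover_count J u = size {#B \<in># J. u \<in> B#}"

lemma cover_count_empty [simp]: "cover_count {#} u = 0"
  by (simp add: cover_count_def)

lemma cover_count_add_mset [simp]:
  "cover_count (add_mset B J) u = (if u \<in> B then 1 else 0) + cover_count J u"
  by (simp add: cover_count_def)

lemma cover_count_pos_iff: "0 < cover_count J u \<longleftrightarrow> (\<exists>B\<in>#J. u \<in> B)"
  by (induction J) auto

lemma cover_count_image_mset_mono:
  "(\<And>B. B \<in># J \<Longrightarrow> B \<subseteq> g B) \<Longrightarrow> cover_count J u \<le> cover_count (image_mset g J) u"
  by (induction J) auto

lemma sum_cover_count: "finite I \<Longrightarrow> (\<Sum>u\<in>I. cover_count J u) = (\<Sum>B\<in>#J. card (B \<inter> I))"
  by (induction J) (simp_all add: sum.distrib sum.If_cases Int_commute)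

lemma sum_cover_count_le_size_filter:
  assumes "finite I" "I \<subseteq> S" "\<And>B. B \<in># J \<Longrightarrow> card (B \<inter> I) \<le> 1"
  shows "(\<Sum>u\<in>I. cover_count J u) \<le> size {#B \<in># J. B \<inter> S \<noteq> {}#}"
  using assms(3) unfolding sum_cover_count[OF assms(1)]
proof (induction J)
  case (add B J)
  have "card (B \<inter> I) \<le> 1"
    by (rule add.prems) simp
  moreover have "B \<inter> I = {}" if "B \<inter> S = {}"
    using that assms(2) by blast
  ultimately have "card (B \<inter> I) \<le> (if B \<inter> S \<noteq> {} then 1 else 0)"
    by (cases "B \<inter> S = {}") simp_all
  moreover have "(\<Sum>B'\<in>#J. card (B' \<inter> I)) \<le> size {#B' \<in># J. B' \<inter> S \<noteq> {}#}"
    by (intro add.IH add.prems) simp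
  ultimately show ?case by (cases "B \<inter> S = {}") simp_all
qed simp

lemma sum_weighted_cover_count:
  assumes "finite V" "\<And>B. B \<in># J \<Longrightarrow> B \<subseteq> V"
  shows "(\<Sum>u\<in>V. w u * cover_count J u) = (\<Sum>B\<in>#J. sum w B)"
  using assms(2)
proof (induction J)
  case (add B J)
  have "(\<Sum>u\<in>V. w u * (if u \<in> B then 1 else 0)) = (\<Sum>u\<in>V. if u \<in> B then w u else 0)"
    by (rule sum.cong) auto
  also have "\<dots> = sum w (V \<inter> B)"
    using assms(1) by (simp add: sum.inter_restrict)
  also have "\<dots> = sum w B"
    using add.prems by (simp add: Int_absorb1)
  finally have "(\<Sum>u\<in>V. w u * (if u \<in> B then 1 else 0)) = sum w B" .
  with add show ?case by (simp add: distrib_left sum.distrib)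
qed simp

section \<open>Weighted colourings of perfect graphs\<close>

lemma ex_proper_colouring_chromatic_number:
  assumes "simple_graph V E" "S \<subseteq> V"
  shows "\<exists>c. proper_colouring E S (chromatic_number E S) c"
proof -
  have "finite S"
    using assms finite_subset by (auto simp: simple_graph_def)
  then obtain c where c: "bij_betw c S {0..<card S}"
    using ex_bij_betw_finite_nat by blast
  have "proper_colouring E S (card S) c"
    unfolding proper_colouring_def
  proof safe
    fix v assume "v \<in> S"
    then show "c v < card S"
      using c by (auto simp: bij_betw_def)
  next
    fix u v assume "u \<in> S" "v \<in> S" "E u v" "c u = c v"
    then have "u = v"
      using c by (auto simp: bij_betw_def inj_on_def)
    with \<open>E u v\<close> \<open>v \<in> S\<close> assms show False
      by (auto simp: simple_graph_def)
  qed
  then have "\<exists>k. Ex (proper_colouring E S k)"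
    by blast
  then show ?thesis
    unfolding chromatic_number_def by (rule LeastI_ex)
qed

lemma colour_classes_cover:
  assumes "proper_colouring E S k c" "S \<subseteq> V"
  shows "\<exists>J. (\<forall>B\<in>#J. stable_set E V B) \<and> size J = k \<and> (\<forall>v. cover_count J v = (if v \<in> S then 1 else 0))"
proof -
  define J where "J = image_mset (\<lambda>i. {u \<in> S. c u = i}) (mset_set {0..<k})"
  have "\<forall>B\<in>#J. stable_set E V B"
    using assms unfolding J_def stable_set_def proper_colouring_def by fastforce
  moreover have "cover_count J v = (if v \<in> S then 1 else 0)" for v
  proof -
    have "cover_count J v = card {i \<in> {0..<k}. v \<in> S \<and> c v = i}"
      by (simp add: J_def cover_count_def filter_mset_image_mset)
    also have "{i \<in> {0..<k}. v \<in> S \<and> c v = i} = (if v \<in> S then {c v} else {})"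
      using assms(1) by (auto simp: proper_colouring_def)
    finally show ?thesis by simp
  qed
  ultimately show ?thesis
    by (intro exI[of _ J]) (simp add: J_def)
qed

lemma clique_number_attained:
  assumes "finite S"
  shows "\<exists>Q. clique E S Q \<and> card Q = clique_number E S"
proof -
  have "clique_number E S \<in> card ` cliques E S"
    unfolding clique_number_def using assms clique_empty
    by (intro Max_in) (auto simp: finite_cliques)
  then show ?thesis by auto
qed

definition weighted_colouring :: "'a set \<Rightarrow> ('a \<Rightarrow> 'a \<Rightarrow> bool) \<Rightarrow> ('a \<Rightarrow> nat) \<Rightarrow> 'a set multiset \<Rightarrow> bool" where
  "weighted_colouring V E m J \<longleftrightarrow> (\<forall>B\<in>#J. stable_set E V B) \<and> (\<forall>v\<in>V. cover_count J v = m v)"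

lemma perfect_weighted_colouring_0_1:
  assumes "simple_graph V E" "perfect V E" "\<forall>v\<in>V. m v \<le> 1"
  shows "\<exists>J. weighted_colouring V E m J \<and> size J \<le> max_weight (cliques E V) m"
proof -
  define S where "S = {v \<in> V. m v = 1}"
  have SV: "S \<subseteq> V"
    by (auto simp: S_def)
  have fin: "finite V" "finite S"
    using assms(1) SV finite_subset by (auto simp: simple_graph_def)
  obtain c where "proper_colouring E S (chromatic_number E S) c"
    using ex_proper_colouring_chromatic_number[OF assms(1) SV] by blast
  then obtain J where J: "\<forall>B\<in>#J. stable_set E V B" "size J = chromatic_number E S"
    "\<forall>v. cover_count J v = (if v \<in> S then 1 else 0)"
    using colour_classes_cover SV by blast
  obtain Q where Q: "clique E S Q" "card Q = clique_number E S"
    using clique_number_attained[OF fin(2)] by blast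
  have "clique E V Q"
    using Q(1) by (auto simp: clique_def S_def)
  moreover have "sum m Q = card Q"
    using Q(1) by (auto simp: clique_def S_def subset_iff)
  moreover have "clique_number E S = chromatic_number E S"
    using assms(2) by (simp add: perfect_def S_def)
  ultimately have "size J \<le> max_weight (cliques E V) m"
    using J(2) Q(2) sum_le_max_weight[of "cliques E V" Q m] finite_cliques[OF fin(1)] by simp
  moreover have "weighted_colouring V E m J"
    using J(1,3) assms(3) by (auto simp: weighted_colouring_def S_def le_Suc_eq)
  ultimately show ?thesis by blast
qed

lemma sum_cover_count_clique_less:
  assumes "finite V" "clique E V Q" "\<And>B. B \<in># J \<Longrightarrow> stable_set E V B" "A \<in># J" "A \<inter> Q = {}"
  shows "(\<Sum>u\<in>Q. cover_count J u) < size J"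
proof -
  have "(\<Sum>u\<in>Q. cover_count J u) \<le> size {#B \<in># J. B \<inter> Q \<noteq> {}#}"
  proof (rule sum_cover_count_le_size_filter)
    show "finite Q"
      using assms(1,2) by (rule finite_clique)
    show "card (B \<inter> Q) \<le> 1" if "B \<in># J" for B
      using card_clique_Int_stable_set_le_1[OF assms(2) assms(3)[OF that] \<open>finite Q\<close>]
      by (simp add: Int_commute)
  qed simp
  also have "\<dots> < size J"
    using size_filter_unsat_elem[of A J "\<lambda>B. B \<inter> Q \<noteq> {}"] assms(4,5) by simp
  finally show ?thesis .
qed

lemma weighted_colouring_meets_max_cliques:
  assumes "finite V" "weighted_colouring V E m J" "size J \<le> max_weight (cliques E V) m"
    and "A \<in># J" "clique E V Q" "sum m Q = max_weight (cliques E V) m"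
  shows "A \<inter> Q \<noteq> {}"
proof
  assume "A \<inter> Q = {}"
  have "Q \<subseteq> V"
    using assms(5) by (simp add: clique_def)
  then have "sum m Q = (\<Sum>u\<in>Q. cover_count J u)"
    using assms(2) unfolding weighted_colouring_def by (intro sum.cong) auto
  also have "\<dots> < size J"
    using assms(2) by (intro sum_cover_count_clique_less[OF assms(1,5) _ assms(4) \<open>A \<inter> Q = {}\<close>])
      (simp add: weighted_colouring_def)
  finally show False
    using assms(3,6) by simp
qed

lemma weighted_colouring_member_pos:
  assumes "weighted_colouring V E m J" "A \<in># J" "u \<in> A"
  shows "0 < m u"
proof -
  have "u \<in> V"
    using assms by (auto simp: weighted_colouring_def stable_set_def)
  moreover have "0 < cover_count J u"
    using assms(2,3) by (auto simp: cover_count_pos_iff)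
  ultimately show ?thesis
    using assms(1) by (simp add: weighted_colouring_def)
qed

lemma weighted_colouring_add_mset:
  assumes "weighted_colouring V E (decrement A m) J" "stable_set E V A" "\<forall>u\<in>A. 0 < m u"
  shows "weighted_colouring V E m (add_mset A J)"
  using assms by (auto simp: weighted_colouring_def decrement_def)

lemma max_weight_decrement_colour_class_less:
  assumes fin: "finite V"
    and J: "weighted_colouring V E (decrement {v} m) J"
      "size J \<le> max_weight (cliques E V) (decrement {v} m)"
    and tight: "max_weight (cliques E V) (decrement {v} m) = max_weight (cliques E V) m"
    and A: "A \<in># J" "v \<in> A" and A_pos: "\<forall>u\<in>A. 0 < m u"
  shows "max_weight (cliques E V) (decrement A m) < max_weight (cliques E V) m"
proof -
  have cl: "finite (cliques E V)" "cliques E V \<noteq> {}" "\<And>Q. Q \<in> cliques E V \<Longrightarrow> finite Q"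
    using finite_cliques[OF fin] clique_empty finite_clique[OF fin] by auto
  show ?thesis
  proof (rule max_weight_decrement_less[OF cl])
    fix Q assume Q: "Q \<in> cliques E V" "sum m Q = max_weight (cliques E V) m"
    have "A \<inter> Q \<noteq> {}"
    proof (cases "v \<in> Q")
      case False
      then have "sum (decrement {v} m) Q = sum m Q"
        by (intro sum.cong) (auto simp: decrement_def)
      with Q(2) tight have "sum (decrement {v} m) Q = max_weight (cliques E V) (decrement {v} m)"
        by simp
      then show ?thesis
        using weighted_colouring_meets_max_cliques[OF fin J A(1)] Q(1) by simp
    qed (use A(2) in blast)
    then show "\<exists>u\<in>Q \<inter> A. 0 < m u"
      using A_pos by blast
  qed
qed

lemma weighted_colouring_step:
  assumes fin: "finite V" and v: "v \<in> V" "2 \<le> m v"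
    and IH: "\<And>m'. sum m' V < sum m V \<Longrightarrow>
               \<exists>J. weighted_colouring V E m' J \<and> size J \<le> max_weight (cliques E V) m'"
  shows "\<exists>J. weighted_colouring V E m J \<and> size J \<le> max_weight (cliques E V) m"
proof -
  let ?\<omega> = "max_weight (cliques E V)"
  let ?m' = "decrement {v} m"
  obtain J' where J': "weighted_colouring V E ?m' J'" "size J' \<le> ?\<omega> ?m'"
    using IH sum_decrement_less[OF fin v(1), of "{v}" m] v(2) by auto
  have "?\<omega> ?m' \<le> ?\<omega> m"
    using finite_cliques[OF fin] clique_empty by (intro max_weight_mono) (auto simp: decrement_le)
  then consider (drop) "?\<omega> ?m' < ?\<omega> m" | (tight) "?\<omega> ?m' = ?\<omega> m"
    by linarith
  then show ?thesis
  proof cases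
    case drop
    have "weighted_colouring V E m (add_mset {v} J')"
      using J'(1) v by (intro weighted_colouring_add_mset) (auto simp: stable_set_def)
    with J'(2) drop show ?thesis
      by (intro exI[of _ "add_mset {v} J'"]) simp
  next
    case tight
    \<comment> \<open>Then J' is tight for m as well, so its class through v meets every maximum clique.\<close>
    have "0 < cover_count J' v"
      using J'(1) v by (simp add: weighted_colouring_def decrement_def)
    then obtain A where A: "A \<in># J'" "v \<in> A"
      by (auto simp: cover_count_pos_iff)
    have A_pos: "\<forall>u\<in>A. 0 < m u"
      using weighted_colouring_member_pos[OF J'(1) A(1)] decrement_le[of "{v}" m]
      by (meson less_le_trans)
    have "sum (decrement A m) V < sum m V"
      using sum_decrement_less[OF fin v(1) A(2)] A_pos A(2) by blast
    with max_weight_decrement_colour_class_less[OF fin J' tight A A_pos]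
    obtain J'' where "weighted_colouring V E (decrement A m) J''" "size J'' < ?\<omega> m"
      using IH by (meson le_less_trans)
    moreover have "stable_set E V A"
      using J'(1) A(1) by (simp add: weighted_colouring_def)
    ultimately show ?thesis
      using A_pos by (intro exI[of _ "add_mset A J''"]) (simp add: weighted_colouring_add_mset)
  qed
qed

lemma perfect_weighted_colouring:
  assumes sg: "simple_graph V E" and pf: "perfect V E"
  shows "\<exists>J. weighted_colouring V E m J \<and> size J \<le> max_weight (cliques E V) m"
proof (induction "sum m V" arbitrary: m rule: less_induct)
  case less
  have fin: "finite V"
    using sg by (simp add: simple_graph_def)
  show ?case
  proof (cases "\<forall>v\<in>V. m v \<le> 1")
    case True
    then show ?thesis
      using perfect_weighted_colouring_0_1[OF sg pf] by blast
  next
    case False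
    then obtain v where v: "v \<in> V" "2 \<le> m v"
      by (auto simp: not_le)
    show ?thesis
      by (rule weighted_colouring_step[where m = m, OF fin v less])
  qed
qed

section \<open>Weighted clique covers of perfect graphs\<close>

lemma weighted_colouring_weight_le:
  assumes fin: "finite V" and J: "weighted_colouring V E m J"
  shows "(\<Sum>u\<in>V. w u * m u) \<le> size J * max_weight (stable_sets E V) w"
proof -
  have "(\<Sum>u\<in>V. w u * m u) = (\<Sum>u\<in>V. w u * cover_count J u)"
    using J by (simp add: weighted_colouring_def)
  also have "\<dots> = (\<Sum>B\<in>#J. sum w B)"
    using J by (intro sum_weighted_cover_count[OF fin]) (simp add: weighted_colouring_def stable_set_def)
  also have "\<dots> \<le> (\<Sum>B\<in>#J. max_weight (stable_sets E V) w)"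
  proof (rule sum_mset_mono)
    fix B assume "B \<in># J"
    then have "B \<in> stable_sets E V"
      using J by (simp add: weighted_colouring_def)
    then show "sum w B \<le> max_weight (stable_sets E V) w"
      by (rule sum_le_max_weight[OF finite_stable_sets[OF fin]])
  qed
  also have "\<dots> = size J * max_weight (stable_sets E V) w"
    by simp
  finally show ?thesis .
qed

lemma max_weight_cliques_cover_count_less:
  assumes fin: "finite V" and stable: "\<And>B. B \<in># F \<Longrightarrow> stable_set E V B"
    and avoid: "\<And>Q. clique E V Q \<Longrightarrow> \<exists>B\<in>#F. B \<inter> Q = {}"
  shows "max_weight (cliques E V) (cover_count F) < size F"
proof -
  obtain Q where Q: "clique E V Q" "sum (cover_count F) Q = max_weight (cliques E V) (cover_count F)"
    using max_weight_attained[OF finite_cliques[OF fin]] clique_empty by blast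
  obtain B where B: "B \<in># F" "B \<inter> Q = {}"
    using avoid[OF Q(1)] by blast
  have "sum (cover_count F) Q < size F"
    by (rule sum_cover_count_clique_less[OF fin Q(1) stable B])
  with Q(2) show ?thesis
    by simp
qed

lemma perfect_not_all_cliques_avoid_max_stable_sets:
  assumes sg: "simple_graph V E" and pf: "perfect V E" and pos: "0 < max_weight (stable_sets E V) w"
    and avoid: "\<And>Q. clique E V Q \<Longrightarrow>
                  \<exists>I. stable_set E V I \<and> sum w I = max_weight (stable_sets E V) w \<and> I \<inter> Q = {}"
  shows False
proof -
  let ?\<alpha> = "max_weight (stable_sets E V) w"
  have fin: "finite V"
    using sg by (simp add: simple_graph_def)
  obtain f where f: "\<And>Q. clique E V Q \<Longrightarrow> stable_set E V (f Q) \<and> sum w (f Q) = ?\<alpha> \<and> f Q \<inter> Q = {}"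
    using avoid by metis
  define F where "F = image_mset f (mset_set (cliques E V))"
  have F: "\<And>B. B \<in># F \<Longrightarrow> stable_set E V B \<and> sum w B = ?\<alpha>"
    using f finite_cliques[OF fin] by (auto simp: F_def)
  obtain J where J: "weighted_colouring V E (cover_count F) J"
    "size J \<le> max_weight (cliques E V) (cover_count F)"
    using perfect_weighted_colouring[OF sg pf] by blast
  have "\<exists>B\<in>#F. B \<inter> Q = {}" if "clique E V Q" for Q
    using f[of Q] that finite_cliques[OF fin] by (intro bexI[of _ "f Q"]) (auto simp: F_def)
  then have "max_weight (cliques E V) (cover_count F) < size F"
    using F by (intro max_weight_cliques_cover_count_less[OF fin]) auto
  with J(2) have "size J < size F"
    by linarith
  have "size F * ?\<alpha> = (\<Sum>B\<in>#F. ?\<alpha>)"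
    by simp
  also have "\<dots> = (\<Sum>B\<in>#F. sum w B)"
    using F by (intro arg_cong[where f = sum_mset] image_mset_cong) simp
  also have "\<dots> = (\<Sum>u\<in>V. w u * cover_count F u)"
    using F by (intro sum_weighted_cover_count[OF fin, symmetric]) (simp add: stable_set_def)
  also have "\<dots> \<le> size J * ?\<alpha>"
    by (rule weighted_colouring_weight_le[OF fin J(1)])
  finally show False
    using \<open>size J < size F\<close> pos by simp
qed

lemma perfect_ex_clique_meeting_max_stable_sets:
  assumes sg: "simple_graph V E" and pf: "perfect V E" and pos: "0 < max_weight (stable_sets E V) w"
  shows "\<exists>Q\<in>cliques E V. \<forall>I\<in>stable_sets E V.
           sum w I = max_weight (stable_sets E V) w \<longrightarrow> (\<exists>u\<in>I \<inter> Q. 0 < w u)"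
proof (rule ccontr)
  have fin: "finite V"
    using sg by (simp add: simple_graph_def)
  assume no_such_clique: "\<not> ?thesis"
  show False
  proof (rule perfect_not_all_cliques_avoid_max_stable_sets[OF sg pf pos])
    fix Q assume "clique E V Q"
    then obtain I where I: "stable_set E V I" "sum w I = max_weight (stable_sets E V) w"
      "\<forall>u\<in>I \<inter> Q. w u = 0"
      using no_such_clique by auto
    have "stable_set E V (I - Q)"
      using I(1) by (auto simp: stable_set_def)
    moreover have "sum w (I - Q) = sum w I"
      using finite_stable_set[OF fin I(1)] I(3) by (intro sum.mono_neutral_left) auto
    ultimately show "\<exists>I. stable_set E V I \<and> sum w I = max_weight (stable_sets E V) w \<and> I \<inter> Q = {}"
      using I(2) by (intro exI[of _ "I - Q"]) auto
  qed
qed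

definition weighted_clique_cover :: "'a set \<Rightarrow> ('a \<Rightarrow> 'a \<Rightarrow> bool) \<Rightarrow> ('a \<Rightarrow> nat) \<Rightarrow> 'a set multiset \<Rightarrow> bool" where
  "weighted_clique_cover V E w M \<longleftrightarrow> (\<forall>Q\<in>#M. clique E V Q) \<and> (\<forall>v\<in>V. w v \<le> cover_count M v)"

lemma weighted_clique_cover_add_mset:
  "weighted_clique_cover V E (decrement Q w) M \<Longrightarrow> clique E V Q \<Longrightarrow> weighted_clique_cover V E w (add_mset Q M)"
  by (auto simp: weighted_clique_cover_def decrement_def)

lemma perfect_weighted_clique_cover:
  assumes sg: "simple_graph V E" and pf: "perfect V E"
  shows "\<exists>M. weighted_clique_cover V E w M \<and> size M \<le> max_weight (stable_sets E V) w"
proof (induction "sum w V" arbitrary: w rule: less_induct)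
  case less
  let ?\<alpha> = "max_weight (stable_sets E V)"
  have fin: "finite V"
    using sg by (simp add: simple_graph_def)
  have st: "finite (stable_sets E V)" "stable_sets E V \<noteq> {}" "\<And>I. I \<in> stable_sets E V \<Longrightarrow> finite I"
    using finite_stable_sets[OF fin] stable_set_empty finite_stable_set[OF fin] by auto
  show ?case
  proof (cases "?\<alpha> w = 0")
    case True
    have "w v = 0" if "v \<in> V" for v
      using sum_le_max_weight[OF st(1), of "{v}" w] that True by (simp add: stable_set_def)
    then have "weighted_clique_cover V E w {#}"
      by (simp add: weighted_clique_cover_def)
    then show ?thesis
      by (intro exI[of _ "{#}"]) simp
  next
    case False
    then obtain Q where Q: "clique E V Q"
      and meets: "\<And>I. I \<in> stable_sets E V \<Longrightarrow> sum w I = ?\<alpha> w \<Longrightarrow> \<exists>u\<in>I \<inter> Q. 0 < w u"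
      using perfect_ex_clique_meeting_max_stable_sets[OF sg pf, of w] by auto
    obtain I where I: "stable_set E V I" "sum w I = ?\<alpha> w"
      using max_weight_attained[OF st(1,2)] by auto
    then obtain u where u: "u \<in> I" "u \<in> Q" "0 < w u"
      using meets by blast
    then have "sum (decrement Q w) V < sum w V"
      using I(1) by (intro sum_decrement_less[OF fin]) (auto simp: stable_set_def)
    then obtain M where "weighted_clique_cover V E (decrement Q w) M" "size M \<le> ?\<alpha> (decrement Q w)"
      using less by blast
    moreover have "?\<alpha> (decrement Q w) < ?\<alpha> w"
      using meets by (intro max_weight_decrement_less[OF st]) auto
    ultimately show ?thesis
      using Q by (intro exI[of _ "add_mset Q M"]) (simp add: weighted_clique_cover_add_mset)
  qed
qed

lemma finite_maximal_cliques: "finite V \<Longrightarrow> finite (maximal_cliques V E)"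
  by (rule finite_subset[OF _ finite_cliques]) (auto simp: maximal_cliques_def)

lemma ex_maximal_clique_superset:
  assumes "finite V" "clique E V Q"
  shows "\<exists>Q'\<in>maximal_cliques V E. Q \<subseteq> Q'"
  using finite_has_maximal2[OF finite_cliques[OF assms(1)], of Q] assms(2)
  by (fastforce simp: maximal_cliques_def)

lemma perfect_maximal_clique_cover:
  assumes sg: "simple_graph V E" and pf: "perfect V E"
  shows "\<exists>M. weighted_clique_cover V E w M \<and> set_mset M \<subseteq> maximal_cliques V E
           \<and> size M \<le> max_weight (stable_sets E V) w"
proof -
  have fin: "finite V"
    using sg by (simp add: simple_graph_def)
  obtain M where M: "weighted_clique_cover V E w M" "size M \<le> max_weight (stable_sets E V) w"
    using perfect_weighted_clique_cover[OF sg pf] by blast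
  obtain g where g: "\<And>Q. clique E V Q \<Longrightarrow> g Q \<in> maximal_cliques V E \<and> Q \<subseteq> g Q"
    using ex_maximal_clique_superset[OF fin] by metis
  have maximal: "set_mset (image_mset g M) \<subseteq> maximal_cliques V E"
    using M(1) g by (auto simp: weighted_clique_cover_def)
  have "weighted_clique_cover V E w (image_mset g M)"
    unfolding weighted_clique_cover_def
  proof (intro conjI ballI)
    fix Q assume "Q \<in># image_mset g M"
    then show "clique E V Q"
      using maximal by (auto simp: maximal_cliques_def)
  next
    fix v assume "v \<in> V"
    then have "w v \<le> cover_count M v"
      using M(1) by (simp add: weighted_clique_cover_def)
    also have "\<dots> \<le> cover_count (image_mset g M) v"
      using M(1) g by (intro cover_count_image_mset_mono) (simp add: weighted_clique_cover_def)
    finally show "w v \<le> cover_count (image_mset g M) v" .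
  qed
  with maximal M(2) show ?thesis
    by (intro exI[of _ "image_mset g M"]) simp
qed

lemma sum_count_eq_size: "finite A \<Longrightarrow> set_mset M \<subseteq> A \<Longrightarrow> (\<Sum>x\<in>A. count M x) = size M"
proof (induction M)
  case (add B M)
  have "(\<Sum>x\<in>A. count (add_mset B M) x) = (\<Sum>x\<in>A. (if x = B then 1 else 0) + count M x)"
    by (intro sum.cong) auto
  also have "\<dots> = 1 + (\<Sum>x\<in>A. count M x)"
    using add.prems by (simp add: sum.distrib)
  finally show ?case
    using add by simp
qed simp

lemma cost_attained: "finite S \<Longrightarrow> \<exists>I. stable_set E S I \<and> sum w I = cost E w S"
  unfolding cost_def using Max_in[of "sum w ` stable_sets E S"] finite_stable_sets stable_set_empty
  by fastforce

lemma sum_le_cost: "finite S \<Longrightarrow> stable_set E S I \<Longrightarrow> sum w I \<le> cost E w S"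
  unfolding cost_def by (simp add: finite_stable_sets)

lemma money_count_divide:
  assumes "finite (maximal_cliques V E)" "set_mset M \<subseteq> maximal_cliques V E"
  shows "money V E (\<lambda>Q. of_nat (count M Q) / of_nat D) S = of_nat (size {#Q \<in># M. Q \<inter> S \<noteq> {}#}) / of_nat D"
proof -
  let ?MS = "{Q \<in> maximal_cliques V E. Q \<inter> S \<noteq> {}}"
  have "money V E (\<lambda>Q. of_nat (count M Q) / of_nat D) S = of_nat (\<Sum>Q\<in>?MS. count M Q) / of_nat D"
    by (simp add: money_def sum_divide_distrib)
  also have "(\<Sum>Q\<in>?MS. count M Q) = (\<Sum>Q\<in>?MS. count {#Q \<in># M. Q \<inter> S \<noteq> {}#} Q)"
    by (intro sum.cong) auto
  also have "\<dots> = size {#Q \<in># M. Q \<inter> S \<noteq> {}#}"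
    using assms by (intro sum_count_eq_size) auto
  finally show ?thesis .
qed

lemma cost_scaled_le_meeting_cliques:
  assumes fin: "finite V" and S: "S \<subseteq> V" and wn: "\<forall>v\<in>V. w v * of_nat D = of_nat (wn v)"
    and M: "weighted_clique_cover V E wn M"
  shows "cost E w S * of_nat D \<le> of_nat (size {#Q \<in># M. Q \<inter> S \<noteq> {}#})"
proof -
  have finS: "finite S"
    using S fin by (rule finite_subset)
  obtain I where I: "stable_set E S I" "sum w I = cost E w S"
    using cost_attained[OF finS] by blast
  have IS: "I \<subseteq> S" "finite I"
    using I(1) finite_stable_set[OF finS] by (auto simp: stable_set_def)
  have "sum wn I \<le> (\<Sum>u\<in>I. cover_count M u)"
    using M IS(1) S by (intro sum_mono) (auto simp: weighted_clique_cover_def)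
  also have "\<dots> \<le> size {#Q \<in># M. Q \<inter> S \<noteq> {}#}"
  proof (rule sum_cover_count_le_size_filter[OF IS(2) IS(1)])
    fix B assume "B \<in># M"
    then have "clique E V B"
      using M by (simp add: weighted_clique_cover_def)
    then show "card (B \<inter> I) \<le> 1"
      using card_clique_Int_stable_set_le_1[OF _ I(1)] finite_clique[OF fin] by blast
  qed
  finally have "sum wn I \<le> size {#Q \<in># M. Q \<inter> S \<noteq> {}#}" .
  moreover have "sum w I * of_nat D = of_nat (sum wn I)"
    using wn IS(1) S by (simp add: sum_distrib_right subset_iff)
  ultimately show ?thesis
    using I(2) by (metis of_nat_le_iff)
qed

lemma max_weight_scaled_le_cost:
  assumes fin: "finite V" and wn: "\<forall>v\<in>V. w v * of_nat D = of_nat (wn v)"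
  shows "of_nat (max_weight (stable_sets E V) wn) \<le> cost E w V * of_nat D"
proof -
  obtain I where I: "stable_set E V I" "sum wn I = max_weight (stable_sets E V) wn"
    using max_weight_attained[OF finite_stable_sets[OF fin]] stable_set_empty by blast
  have "of_nat (sum wn I) = sum w I * of_nat D"
    using wn I(1) by (simp add: stable_set_def sum_distrib_right subset_iff)
  also have "\<dots> \<le> cost E w V * of_nat D"
    using sum_le_cost[OF fin I(1)] by (simp add: mult_right_mono)
  finally show ?thesis
    using I(2) by simp
qed

lemma scaled_clique_cover_in_core:
  assumes fin: "finite V" and D: "0 < D" and wn: "\<forall>v\<in>V. w v * of_nat D = of_nat (wn v)"
    and M: "weighted_clique_cover V E wn M" "set_mset M \<subseteq> maximal_cliques V E"
      "size M \<le> max_weight (stable_sets E V) wn"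
  shows "(\<lambda>Q. of_nat (count M Q) / of_nat D) \<in> core V E w"
proof -
  define y where "y = (\<lambda>Q. of_nat (count M Q) / (of_nat D :: rat))"
  let ?MC = "maximal_cliques V E"
  have finMC: "finite ?MC"
    by (rule finite_maximal_cliques[OF fin])
  have D': "0 < (of_nat D :: rat)"
    using D by simp
  have cost_le_money: "cost E w S \<le> money V E y S" if "S \<subseteq> V" for S
    using cost_scaled_le_meeting_cliques[OF fin that wn M(1)] D'
    by (simp add: y_def money_count_divide[OF finMC M(2)] pos_le_divide_eq)
  have "(\<Sum>Q\<in>?MC. y Q) = of_nat (\<Sum>Q\<in>?MC. count M Q) / of_nat D"
    by (simp add: y_def sum_divide_distrib)
  also have "\<dots> = of_nat (size M) / of_nat D"
    by (simp add: sum_count_eq_size[OF finMC M(2)])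
  also have "\<dots> \<le> cost E w V"
    using M(3) max_weight_scaled_le_cost[OF fin wn, of E] D'
    by (simp add: divide_le_eq order_trans[OF of_nat_mono])
  finally have "(\<Sum>Q\<in>?MC. y Q) \<le> cost E w V" .
  moreover have "cost E w V \<le> money V E y V"
    by (rule cost_le_money) simp
  moreover have "money V E y V \<le> (\<Sum>Q\<in>?MC. y Q)"
    unfolding money_def using finMC by (intro sum_mono2) (auto simp: y_def)
  ultimately have "(\<Sum>Q\<in>?MC. y Q) = cost E w V"
    by linarith
  then have "y \<in> core V E w"
    using cost_le_money by (auto simp: core_def imputation_def y_def)
  then show ?thesis
    by (simp add: y_def)
qed

lemma nonneg_rat_common_denominator:
  fixes w :: "'a \<Rightarrow> rat"
  assumes "finite V" "\<forall>v\<in>V. 0 \<le> w v"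
  shows "\<exists>D::nat. 0 < D \<and> (\<forall>v\<in>V. w v * of_nat D \<in> \<nat>)"
  using assms
proof (induction V rule: finite_induct)
  case empty
  then show ?case by auto
next
  case (insert x F)
  obtain D where D: "0 < D" "\<forall>v\<in>F. w v * of_nat D \<in> \<nat>"
    using insert by auto
  obtain a b where ab: "quotient_of (w x) = (a, b)"
    by fastforce
  have b: "0 < b" and wx: "w x = of_int a / of_int b"
    using quotient_of_denom_pos[OF ab] quotient_of_div[OF ab] by auto
  have "0 \<le> a"
    using insert.prems b wx by (simp add: zero_le_divide_iff)
  have "w v * of_nat (D * nat b) \<in> \<nat>" if "v \<in> insert x F" for v
  proof (cases "v = x")
    case True
    have "w x * of_nat (D * nat b) = (w x * of_int b) * of_nat D"
      using b by (simp add: mult_ac)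
    also have "\<dots> = of_nat (nat a * D)"
      using b \<open>0 \<le> a\<close> wx by simp
    finally show ?thesis
      using True by (metis of_nat_in_Nats)
  next
    case False
    then have "w v * of_nat D \<in> \<nat>"
      using that D(2) by simp
    from Nats_mult[OF this of_nat_in_Nats, of "nat b"] show ?thesis
      by (metis mult.assoc of_nat_mult)
  qed
  with D(1) b show ?case
    by (intro exI[of _ "D * nat b"]) simp
qed

theorem corollary18:
  fixes V :: "'a set" and E :: "'a \<Rightarrow> 'a \<Rightarrow> bool" and w :: "'a \<Rightarrow> rat"
  assumes "simple_graph V E"
    and "perfect V E"
    and "\<forall>v\<in>V. w v \<ge> 0"
  shows "core V E w \<noteq> {}"
proof -
  have fin: "finite V"
    using assms(1) by (simp add: simple_graph_def)
  obtain D :: nat where D: "0 < D" "\<forall>v\<in>V. w v * of_nat D \<in> \<nat>"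
    using nonneg_rat_common_denominator[OF fin assms(3)] by blast
  have "\<exists>n. w v * of_nat D = of_nat n" if "v \<in> V" for v
    using D(2) that by (auto elim!: Nats_cases)
  then obtain wn where wn: "\<forall>v\<in>V. w v * of_nat D = of_nat (wn v)"
    by metis
  obtain M where M: "weighted_clique_cover V E wn M" "set_mset M \<subseteq> maximal_cliques V E"
    "size M \<le> max_weight (stable_sets E V) wn"
    using perfect_maximal_clique_cover[OF assms(1,2)] by blast
  show ?thesis
    using scaled_clique_cover_in_core[OF fin D(1) wn M] by blast
qed

end
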